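(* Let $n=2\ell$ where $\ell\ge3$ is odd. For $0\le k\le n-1$ let $p_k:=\left(1,\cos\frac{2\pi k}{n},\sin\frac{2\pi k}{n}\right)\in\mathbb{R}^3$, and let $X:=(\langle p_k,p_{k'}\rangle)_{0\le k,k'\le n-1}$. Then $X$ is a Gram-Lorentz matrix that is not completely positive; in particular $X$ is completely positive semidefinite but not completely positive.
   Context: The Lorentz cone is $\mathcal{L}_m:=\{(c,x)\in\mathbb{R}\times\mathbb{R}^{m-1}: c\ge\|x\|\}$. A real symmetric $n\times n$ matrix is Gram-Lorentz if it is the Gram matrix of vectors lying in some $\mathcal{L}_m$. An $n\times n$ matrix $X$ is completely positive if $X_{ij}=\langle a_i,a_j\rangle$ for some entrywise nonnegative vectors $a_1,\dots,a_n\in\mathbb{R}^k_+$, and completely positive semidefinite if $X_{ij}=\mathrm{Tr}(P_iP_j)$ for some Hermitian positive semidefinite $d\times d$ matrices $P_1,\dots,P_n$ (some $d\ge1$). *)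

theory Defs
  imports Complex_Main
begin

text \<open>Vectors in R^m are represented as functions nat => real, with only the
indices 0..m-1 relevant; a family of n vectors/matrices is indexed by i < n.
Index 0 is the "c" coordinate of the Lorentz cone.\<close>

definition lorentz_cone :: "nat \<Rightarrow> (nat \<Rightarrow> real) set" where
  "lorentz_cone m = {v. v 0 \<ge> sqrt (\<Sum>t\<in>{1..<m}. (v t)\<^sup>2)}"

definition gram_lorentz :: "nat \<Rightarrow> (nat \<Rightarrow> nat \<Rightarrow> real) \<Rightarrow> bool" where
  "gram_lorentz n X \<longleftrightarrow>
     (\<exists>m\<ge>1. \<exists>v :: nat \<Rightarrow> nat \<Rightarrow> real.
        (\<forall>i<n. v i \<in> lorentz_cone m) \<and>
        (\<forall>i<n. \<forall>j<n. X i j = (\<Sum>t<m. v i t * v j t)))"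

definition completely_positive :: "nat \<Rightarrow> (nat \<Rightarrow> nat \<Rightarrow> real) \<Rightarrow> bool" where
  "completely_positive n X \<longleftrightarrow>
     (\<exists>k. \<exists>a :: nat \<Rightarrow> nat \<Rightarrow> real.
        (\<forall>i<n. \<forall>t<k. a i t \<ge> 0) \<and>
        (\<forall>i<n. \<forall>j<n. X i j = (\<Sum>t<k. a i t * a j t)))"

definition hermitian_psd :: "nat \<Rightarrow> (nat \<Rightarrow> nat \<Rightarrow> complex) \<Rightarrow> bool" where
  "hermitian_psd d P \<longleftrightarrow>
     (\<forall>a<d. \<forall>b<d. P a b = cnj (P b a)) \<and>
     (\<forall>x :: nat \<Rightarrow> complex.
        0 \<le> Re (\<Sum>a<d. \<Sum>b<d. cnj (x a) * P a b * x b))"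

definition mat_trace_prod :: "nat \<Rightarrow> (nat \<Rightarrow> nat \<Rightarrow> complex) \<Rightarrow> (nat \<Rightarrow> nat \<Rightarrow> complex) \<Rightarrow> complex" where
  "mat_trace_prod d P Q = (\<Sum>a<d. \<Sum>b<d. P a b * Q b a)"

definition completely_positive_semidefinite :: "nat \<Rightarrow> (nat \<Rightarrow> nat \<Rightarrow> real) \<Rightarrow> bool" where
  "completely_positive_semidefinite n X \<longleftrightarrow>
     (\<exists>d\<ge>1. \<exists>P :: nat \<Rightarrow> nat \<Rightarrow> nat \<Rightarrow> complex.
        (\<forall>i<n. hermitian_psd d (P i)) \<and>
        (\<forall>i<n. \<forall>j<n. complex_of_real (X i j) = mat_trace_prod d (P i) (P j)))"

definition circ_pt :: "nat \<Rightarrow> nat \<Rightarrow> nat \<Rightarrow> real" where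
  "circ_pt n k t = (if t = 0 then 1
                    else if t = 1 then cos (2 * pi * real k / real n)
                    else if t = 2 then sin (2 * pi * real k / real n) else 0)"

definition circ_gram :: "nat \<Rightarrow> nat \<Rightarrow> nat \<Rightarrow> real" where
  "circ_gram n k k' = (\<Sum>t<3. circ_pt n k t * circ_pt n k' t)"

end

theory Submission
  imports Defs
begin

text \<open>Each p_k lies on the boundary of the Lorentz cone, so X is Gram-Lorentz. With
\<theta>_k = 2\<pi>k/n one has X_kk' = 1 + cos (\<theta>_k - \<theta>_k') = 2 cos^2 ((\<theta>_k - \<theta>_k')/2), which
is Tr (P_k P_k') for the rank-one matrices P_k = sqrt 2 u_k u_k^T with
u_k = (cos (\<theta>_k/2), sin (\<theta>_k/2)); hence X is completely positive semidefinite.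

If X = A A^T with nonnegative rows a_k, then every linear relation among the p_k also holds
among the a_k, and a_k is orthogonal to a_(k+l) since antipodal points p_k, p_(k+l) are
orthogonal; being nonnegative, a_k and a_(k+l) have disjoint supports. Coordinatewise, the
relations p_k + p_(k+l) = p_0 + p_l (k = 1, 2) and p_0 + p_2 - 2c p_1 = (1 - c)(p_0 + p_l),
where c = cos (\<pi>/l) lies strictly between 0 and 1, then force a_0 = 0, contradicting
X_00 = 2.\<close>

lemma sum_square_lincomb:
  fixes c :: "'a \<Rightarrow> real" and v :: "'a \<Rightarrow> nat \<Rightarrow> real"
  shows "(\<Sum>t<k. (\<Sum>j\<in>J. c j * v j t)\<^sup>2) =
         (\<Sum>j\<in>J. \<Sum>j'\<in>J. c j * c j' * (\<Sum>t<k. v j t * v j' t))"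
proof -
  have "(\<Sum>t<k. (\<Sum>j\<in>J. c j * v j t)\<^sup>2) =
        (\<Sum>t<k. \<Sum>j\<in>J. \<Sum>j'\<in>J. c j * c j' * (v j t * v j' t))"
    by (simp add: power2_eq_square sum_product mult_ac)
  also have "\<dots> = (\<Sum>j\<in>J. \<Sum>j'\<in>J. c j * c j' * (\<Sum>t<k. v j t * v j' t))"
    by (simp add: sum_distrib_left sum.swap[of _ "{..<k}"])
  finally show ?thesis .
qed

text \<open>The squared norm of a linear combination depends only on the Gram matrix, so linear
  relations transfer between families with the same Gram matrix.\<close>

lemma lincomb_eq_zero_if_gram_eq:
  fixes a b :: "nat \<Rightarrow> nat \<Rightarrow> real"
  assumes gram: "\<forall>i\<in>I. \<forall>j\<in>I. (\<Sum>t<k. a i t * a j t) = (\<Sum>u<m. b i u * b j u)"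
    and "ix ` J \<subseteq> I" and rel: "\<forall>u<m. (\<Sum>j\<in>J. c j * b (ix j) u) = 0" and "t < k"
  shows "(\<Sum>j\<in>J. c j * a (ix j) t) = 0"
proof -
  have "(\<Sum>t<k. (\<Sum>j\<in>J. c j * a (ix j) t)\<^sup>2) =
        (\<Sum>u<m. (\<Sum>j\<in>J. c j * b (ix j) u)\<^sup>2)"
    unfolding sum_square_lincomb using gram \<open>ix ` J \<subseteq> I\<close> by (intro sum.cong) auto
  also have "\<dots> = 0" using rel by simp
  finally show ?thesis
    using sum_nonneg_eq_0_iff[of "{..<k}" "\<lambda>t. (\<Sum>j\<in>J. c j * a (ix j) t)\<^sup>2"] \<open>t < k\<close> by simp
qed

lemma four_term_relation_if_gram_eq:
  fixes a b :: "nat \<Rightarrow> nat \<Rightarrow> real"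
  assumes gram: "\<forall>i\<in>I. \<forall>j\<in>I. (\<Sum>t<k. a i t * a j t) = (\<Sum>u<m. b i u * b j u)"
    and "i1 \<in> I" "i2 \<in> I" "i3 \<in> I" "i4 \<in> I"
    and rel: "\<forall>u<m. c1 * b i1 u + c2 * b i2 u + c3 * b i3 u + c4 * b i4 u = 0" and "t < k"
  shows "c1 * a i1 t + c2 * a i2 t + c3 * a i3 t + c4 * a i4 t = 0"
proof -
  have sum4: "(\<Sum>j<4::nat. f j) = f 0 + f 1 + f 2 + (f 3 :: real)" for f
    by (simp add: numeral_eq_Suc)
  have "(\<Sum>j<4. [c1, c2, c3, c4] ! j * a ([i1, i2, i3, i4] ! j) t) = 0"
  proof (rule lincomb_eq_zero_if_gram_eq[OF gram _ _ \<open>t < k\<close>])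
    show "(!) [i1, i2, i3, i4] ` {..<4} \<subseteq> I"
      using assms(2-5) by (auto simp: numeral_eq_Suc less_Suc_eq)
    show "\<forall>u<m. (\<Sum>j<4. [c1, c2, c3, c4] ! j * b ([i1, i2, i3, i4] ! j) u) = 0"
      using rel by (simp add: sum4)
  qed
  then show ?thesis by (simp add: sum4)
qed

lemma mult_eq_zero_if_nonneg_inner_zero:
  fixes f g :: "nat \<Rightarrow> real"
  assumes "\<forall>t<k. f t \<ge> 0" "\<forall>t<k. g t \<ge> 0" "(\<Sum>t<k. f t * g t) = 0" "t < k"
  shows "f t * g t = 0"
  using sum_nonneg_eq_0_iff[of "{..<k}" "\<lambda>t. f t * g t"] assms by simp

lemma circ_gram_eq_cos_diff:
  "circ_gram n i j = 1 + cos (2 * pi * real i / real n - 2 * pi * real j / real n)"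
  by (simp add: circ_gram_def circ_pt_def numeral_3_eq_3 cos_diff)

lemma circ_angle_antipodal:
  assumes "n = 2 * l" "l > 0"
  shows "2 * pi * real (i + l) / real n = 2 * pi * real i / real n + pi"
  using assms by (simp add: field_simps)

lemma circ_gram_antipodal:
  assumes "n = 2 * l" "l > 0"
  shows "circ_gram n i (i + l) = 0"
  unfolding circ_gram_eq_cos_diff circ_angle_antipodal[OF assms] by simp

lemma circ_pt_antipodal_sum:
  assumes "n = 2 * l" "l > 0"
  shows "circ_pt n i u + circ_pt n (i + l) u = circ_pt n 0 u + circ_pt n l u"
  using circ_angle_antipodal[OF assms, of i] circ_angle_antipodal[OF assms, of 0]
  by (simp add: circ_pt_def del: of_nat_add)

text \<open>In the plane of the circle p_0 + p_2 = 2c p_1 with c = cos (2\<pi>/n), while p_0 + p_l = (2, 0, 0).\<close>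

lemma circ_pt_chord_relation:
  assumes "n = 2 * l" "l > 0"
  shows "circ_pt n 0 u + circ_pt n 2 u - 2 * cos (2 * pi / real n) * circ_pt n 1 u =
         (1 - cos (2 * pi / real n)) * (circ_pt n 0 u + circ_pt n l u)"
proof -
  define \<theta> where "\<theta> = 2 * pi / real n"
  have "2 * pi * real (2::nat) / real n = 2 * \<theta>" "2 * pi * real (1::nat) / real n = \<theta>"
    by (simp_all add: \<theta>_def)
  moreover have "cos (2 * \<theta>) = 2 * cos \<theta> * cos \<theta> - 1" "sin (2 * \<theta>) = 2 * sin \<theta> * cos \<theta>"
    by (simp_all add: cos_double_cos sin_double power2_eq_square)
  ultimately show ?thesis
    using circ_angle_antipodal[OF assms, of 0]
    by (simp add: circ_pt_def algebra_simps flip: \<theta>_def)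
qed

text \<open>If x0 \<noteq> 0 then xl = 0, so x1 and x2 lie in {0, x0}; but the chord relation gives
  x2 = 2c x1 - c x0 \<in> {-c x0, c x0}.\<close>

lemma chord_relation_forces_zero:
  fixes x0 xl x1 x1l x2 x2l c :: real
  assumes "x0 * xl = 0" "x1 * x1l = 0" "x2 * x2l = 0"
    and "x1 + x1l = x0 + xl" "x2 + x2l = x0 + xl"
    and chord: "x0 + x2 - 2 * c * x1 = (1 - c) * (x0 + xl)" and "0 < c" "c < 1"
  shows "x0 = 0"
proof (rule ccontr)
  assume "x0 \<noteq> 0"
  then have "xl = 0" using assms(1) by simp
  then have x1: "x1 = 0 \<or> x1 = x0" and x2: "x2 = 0 \<or> x2 = x0"
    and chord': "x2 = 2 * c * x1 - c * x0"
    using assms(2-5) chord by (auto simp: algebra_simps)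
  have "(c + 1) * x0 \<noteq> 0" using \<open>x0 \<noteq> 0\<close> \<open>0 < c\<close> by simp
  then have "c * x0 \<noteq> - x0" by (simp add: distrib_right eq_neg_iff_add_eq_0)
  with x1 x2 chord' \<open>x0 \<noteq> 0\<close> \<open>0 < c\<close> \<open>c < 1\<close> show False by auto
qed

lemma cos_two_pi_div_pos:
  assumes "n > 4"
  shows "0 < cos (2 * pi / real n)"
  using assms by (intro cos_gt_zero) (auto simp: field_simps)

lemma cos_two_pi_div_lt_one:
  assumes "n > 1"
  shows "cos (2 * pi / real n) < 1"
proof -
  have "cos (2 * pi / real n) < cos 0"
    using assms by (intro cos_monotone_0_pi) (auto simp: field_simps)
  then show ?thesis by simp
qed

lemma hermitian_psd_rank_one:
  fixes u :: "nat \<Rightarrow> real"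
  assumes "r \<ge> 0"
  shows "hermitian_psd d (\<lambda>a b. complex_of_real (r * u a * u b))"
  unfolding hermitian_psd_def
proof (intro conjI allI impI)
  fix a b show "complex_of_real (r * u a * u b) = cnj (complex_of_real (r * u b * u a))"
    by (simp add: mult_ac)
next
  fix x :: "nat \<Rightarrow> complex"
  define y where "y = (\<Sum>b<d. of_real (u b) * x b)"
  have "(\<Sum>a<d. \<Sum>b<d. cnj (x a) * complex_of_real (r * u a * u b) * x b) =
        of_real r * (cnj y * y)"
    by (simp add: y_def sum_product sum_distrib_left mult_ac)
  also have "cnj y * y = of_real ((cmod y)\<^sup>2)"
    by (metis complex_norm_square mult.commute of_real_power)
  finally show "0 \<le> Re (\<Sum>a<d. \<Sum>b<d. cnj (x a) * complex_of_real (r * u a * u b) * x b)"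
    using assms by simp
qed

lemma mat_trace_prod_rank_one:
  fixes u w :: "nat \<Rightarrow> real"
  shows "mat_trace_prod d (\<lambda>a b. complex_of_real (r * u a * u b))
           (\<lambda>a b. complex_of_real (s * w a * w b)) =
         of_real (r * s * (\<Sum>a<d. u a * w a)\<^sup>2)"
  by (simp add: mat_trace_prod_def power2_eq_square sum_product sum_distrib_left mult_ac)

lemma circ_gram_factor_relations:
  fixes a :: "nat \<Rightarrow> nat \<Rightarrow> real"
  assumes "n = 2 * l" "l > 1"
    and factor: "\<forall>i<n. \<forall>j<n. circ_gram n i j = (\<Sum>t<k. a i t * a j t)" and "t < k"
  shows circ_gram_factor_antipodal_sum: "i < l \<Longrightarrow> a i t + a (i + l) t = a 0 t + a l t"
    and circ_gram_factor_chord: "a 0 t + a 2 t - 2 * cos (2 * pi / real n) * a 1 t =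
                                 (1 - cos (2 * pi / real n)) * (a 0 t + a l t)"
proof -
  have gram: "\<forall>i\<in>{..<n}. \<forall>j\<in>{..<n}.
                (\<Sum>t<k. a i t * a j t) = (\<Sum>u<3. circ_pt n i u * circ_pt n j u)"
    using factor by (simp add: circ_gram_def)
  have "l > 0" using assms by simp
  show "a i t + a (i + l) t = a 0 t + a l t" if "i < l"
  proof -
    have "1 * a i t + 1 * a (i + l) t + - 1 * a 0 t + - 1 * a l t = 0"
      by (rule four_term_relation_if_gram_eq[OF gram])
        (use circ_pt_antipodal_sum[OF assms(1) \<open>l > 0\<close>] assms that in auto)
    then show ?thesis by simp
  qed
  define c where "c = cos (2 * pi / real n)"
  have "c * a 0 t + 1 * a 2 t + (- 2 * c) * a 1 t + (c - 1) * a l t = 0"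
  proof (rule four_term_relation_if_gram_eq[OF gram])
    show "\<forall>u<3. c * circ_pt n 0 u + 1 * circ_pt n 2 u + (- 2 * c) * circ_pt n 1 u
                  + (c - 1) * circ_pt n l u = 0"
      using circ_pt_chord_relation[OF assms(1) \<open>l > 0\<close>] unfolding c_def
      by (simp add: algebra_simps)
  qed (use assms in auto)
  then show "a 0 t + a 2 t - 2 * c * a 1 t = (1 - c) * (a 0 t + a l t)"
    by (simp add: algebra_simps)
qed

lemma circ_gram_not_completely_positive:
  assumes "n = 2 * l" "l \<ge> 3"
  shows "\<not> completely_positive n (circ_gram n)"
proof
  assume "completely_positive n (circ_gram n)"
  then obtain k :: nat and a where nonneg: "\<forall>i<n. \<forall>t<k. a i t \<ge> 0"
    and factor: "\<forall>i<n. \<forall>j<n. circ_gram n i j = (\<Sum>t<k. a i t * a j t)"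
    unfolding completely_positive_def by blast
  have "l > 0" "1 < l" "2 < l" using assms by auto
  have orth: "a i t * a (i + l) t = 0" if "i < l" "t < k" for i t
  proof (rule mult_eq_zero_if_nonneg_inner_zero[OF _ _ _ \<open>t < k\<close>])
    have "i < n" "i + l < n" using that assms by auto
    then show "\<forall>t<k. a i t \<ge> 0" "\<forall>t<k. a (i + l) t \<ge> 0"
      and "(\<Sum>t<k. a i t * a (i + l) t) = 0"
      using nonneg factor circ_gram_antipodal[OF assms(1) \<open>l > 0\<close>, of i] by auto
  qed
  have "a 0 t = 0" if "t < k" for t
  proof (rule chord_relation_forces_zero)
    show "a 0 t * a l t = 0" using orth[of 0 t] \<open>l > 0\<close> that by simp
    show "a 1 t * a (1 + l) t = 0" "a 2 t * a (2 + l) t = 0"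
      using orth[OF \<open>1 < l\<close> that] orth[OF \<open>2 < l\<close> that] by simp_all
    show "a 1 t + a (1 + l) t = a 0 t + a l t" "a 2 t + a (2 + l) t = a 0 t + a l t"
      using circ_gram_factor_antipodal_sum[OF assms(1) \<open>1 < l\<close> factor that \<open>1 < l\<close>]
        circ_gram_factor_antipodal_sum[OF assms(1) \<open>1 < l\<close> factor that \<open>2 < l\<close>] .
    show "a 0 t + a 2 t - 2 * cos (2 * pi / real n) * a 1 t =
          (1 - cos (2 * pi / real n)) * (a 0 t + a l t)"
      using circ_gram_factor_chord[OF assms(1) \<open>1 < l\<close> factor that] .
    show "0 < cos (2 * pi / real n)" "cos (2 * pi / real n) < 1"
      using assms by (intro cos_two_pi_div_pos cos_two_pi_div_lt_one; simp)+
  qed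
  then have "circ_gram n 0 0 = 0" using factor assms by simp
  then show False by (simp add: circ_gram_eq_cos_diff)
qed

lemma circ_gram_gram_lorentz: "gram_lorentz n (circ_gram n)"
  unfolding gram_lorentz_def
proof (intro exI[of _ 3] conjI exI[of _ "circ_pt n"] allI impI)
  fix i
  have "{1..<3::nat} = {1, 2}" by auto
  then show "circ_pt n i \<in> lorentz_cone 3"
    by (simp add: lorentz_cone_def circ_pt_def)
qed (auto simp: circ_gram_def)

lemma circ_gram_completely_positive_semidefinite:
  "completely_positive_semidefinite n (circ_gram n)"
proof -
  define h where "h i = pi * real i / real n" for i
  define u where "u i a = (if a = 0 then cos (h i) else sin (h i))" for i and a :: nat
  define P where "P i = (\<lambda>a b. complex_of_real (sqrt 2 * u i a * u i b))" for i
  have "complex_of_real (circ_gram n i j) = mat_trace_prod 2 (P i) (P j)" for i j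
  proof -
    have "(\<Sum>a<2. u i a * u j a) = cos (h i - h j)"
      by (simp add: u_def numeral_2_eq_2 cos_diff)
    then have "mat_trace_prod 2 (P i) (P j) = of_real (2 * (cos (h i - h j))\<^sup>2)"
      unfolding P_def mat_trace_prod_rank_one by simp
    also have "2 * (cos (h i - h j))\<^sup>2 = 1 + cos (2 * (h i - h j))"
      by (simp only: cos_double_cos[of "h i - h j"])
    also have "2 * (h i - h j) = 2 * pi * real i / real n - 2 * pi * real j / real n"
      by (simp add: h_def diff_divide_distrib)
    finally show ?thesis by (simp add: circ_gram_eq_cos_diff)
  qed
  moreover have "hermitian_psd 2 (P i)" for i
    unfolding P_def by (rule hermitian_psd_rank_one) simp
  ultimately show ?thesis
    unfolding completely_positive_semidefinite_def
    by (intro exI[of _ 2] conjI exI[of _ P] allI impI) auto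
qed

theorem corollary4p11:
  fixes l n :: nat
  assumes "odd l" and "l \<ge> 3" and "n = 2 * l"
  shows "gram_lorentz n (circ_gram n) \<and> \<not> completely_positive n (circ_gram n) \<and>
         completely_positive_semidefinite n (circ_gram n)"
  using circ_gram_gram_lorentz circ_gram_not_completely_positive[OF assms(3,2)]
    circ_gram_completely_positive_semidefinite by blast

end
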